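(* Let $(\Phi,\Sigma_\Phi)$ be a measurable space, $\pi$ a probability measure on it, and $\nu$ a probability measure on $(\Phi,\Sigma_\Phi)$ absolutely continuous with respect to $\pi$. (i) For all $f\in\mathcal{F}_c$, all $\lambda>0$, all $c\in\mathbb{R}$ and all $\pi$-measurable $h\colon\Phi\to\mathbb{R}$, $$\mathbb{E}_\nu[h]\leq \lambda^{-1}\tilde{\mathcal{D}}_{f,\pi}^*\big(\lambda(h-c)\big)+c+\lambda^{-1}\mathcal{D}_f(\nu,\pi).$$ (ii) For all convex $f$ with $f(1)=0$, all $\lambda>0$, all $c\in\mathbb{R}$ and all $\pi$-measurable $h\colon\Phi\to\mathbb{R}$, $$\mathbb{E}_\nu[h]\leq \lambda^{-1}\mathcal{L}_{f,\pi}\big(\lambda(h-c)\big)+c+\lambda^{-1}\mathcal{D}_f(\nu,\pi).$$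
   Context: $\mathcal{F}$ is the set of convex functions $f\colon\mathbb{R}\to\mathbb{R}\cup\{+\infty\}$ with $f(1)=0$, $f(x)\in\mathbb{R}$ for all $x>0$, and $f(x)=+\infty$ for all $x<0$; $\mathcal{F}_c$ is the subset of $f\in\mathcal{F}$ that are continuous on $[0,\infty)$, twice differentiable on $(0,\infty)$, and such that $1/f''$ is concave on $(0,\infty)$. For such $f$ and probability measures $\nu,\mu$, the $f$-divergence is $\mathcal{D}_f(\nu,\mu)=\int f\big(\frac{\mathrm{d}\nu}{\mathrm{d}\mu}\big)\mathrm{d}\mu$ if $\nu\ll\mu$ and $+\infty$ otherwise. The Legendre transform is $f^*(t)=\sup_{x\geq 0}\{xt-f(x)\}$; $f'$ and ${f^*}'$ denote derivatives (or any element of the subdifferential where not differentiable), with $f'(0):=\inf\bigcup_{x>0}f'(x)$. Define $\mathcal{L}_{f,\pi}(h):=\mathbb{E}_\pi[f^*(h)]$ (equal to $+\infty$ if $f^*(h)$ is not $\pi$-integrable), and $$\tilde{\mathcal{D}}_{f,\pi}^*(h):=\mathbb{E}_\pi[f^*(h)]+f'\big(\mathbb{E}_\pi[{f^*}'(h)]\big)-f^*\big(f'\big(\mathbb{E}_\pi[{f^*}'(h)]\big)\big),$$ with the conventions that $\tilde{\mathcal{D}}_{f,\pi}^*(h)=+\infty$ if $f^*(h)$ is not $\pi$-integrable, and $\tilde{\mathcal{D}}_{f,\pi}^*(h)=\mathbb{E}_\pi[f^*(h)]$ if ${f^*}'(h)$ is not $\pi$-integrable. $\mathbb{E}_\nu[\cdot]=\int\cdot\,\mathrm{d}\nu$,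 $\mathbb{E}_\pi[\cdot]=\int\cdot\,\mathrm{d}\pi$. *)

theory Defs
  imports "HOL-Probability.Probability"
begin

text \<open>Functions f : R -> R \<union> {+\<infinity>} are modelled as real \<Rightarrow> ereal.\<close>

definition ereal_convex :: "(real \<Rightarrow> ereal) \<Rightarrow> bool" where
  "ereal_convex f \<longleftrightarrow>
     (\<forall>x y t. 0 \<le> t \<and> t \<le> 1 \<longrightarrow>
        f ((1 - t) * x + t * y) \<le> ereal (1 - t) * f x + ereal t * f y)"

definition fdivF :: "(real \<Rightarrow> ereal) \<Rightarrow> bool" where
  "fdivF f \<longleftrightarrow> ereal_convex f \<and> f 1 = 0 \<and> (\<forall>x. f x \<noteq> -\<infinity>)
     \<and> (\<forall>x>0. f x \<noteq> \<infinity>) \<and> (\<forall>x<0. f x = \<infinity>)"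

text \<open>Real part of f (meaningful on (0,\<infinity>), where f is finite).\<close>
definition freal :: "(real \<Rightarrow> ereal) \<Rightarrow> real \<Rightarrow> real" where
  "freal f = (\<lambda>x. real_of_ereal (f x))"

definition fdivFc :: "(real \<Rightarrow> ereal) \<Rightarrow> bool" where
  "fdivFc f \<longleftrightarrow> fdivF f \<and> continuous_on {0..} f
     \<and> (\<forall>x>0. freal f differentiable (at x) \<and> deriv (freal f) differentiable (at x))
     \<and> concave_on {0<..} (\<lambda>x. 1 / deriv (deriv (freal f)) x)"

text \<open>f' on [0,\<infinity>): the derivative for x > 0, and f'(0) = inf of f'(x) over x > 0
  (possibly -\<infinity>, hence ereal-valued).\<close>
definition fder :: "(real \<Rightarrow> ereal) \<Rightarrow> real \<Rightarrow> ereal" where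
  "fder f x = (if x > 0 then ereal (deriv (freal f) x)
               else (INF y\<in>{0<..}. ereal (deriv (freal f) y)))"

definition fconj :: "(real \<Rightarrow> ereal) \<Rightarrow> ereal \<Rightarrow> ereal" where
  "fconj f t = (SUP x\<in>{0..}. ereal x * t - f x)"

definition eexp :: "'a measure \<Rightarrow> ('a \<Rightarrow> ereal) \<Rightarrow> ereal" where
  "eexp M g = enn2ereal (\<integral>\<^sup>+ x. e2ennreal (g x) \<partial>M)
              - enn2ereal (\<integral>\<^sup>+ x. e2ennreal (- g x) \<partial>M)"

definition fdiv :: "(real \<Rightarrow> ereal) \<Rightarrow> 'a measure \<Rightarrow> 'a measure \<Rightarrow> ereal" where
  "fdiv f \<nu> \<mu> = (if absolutely_continuous \<mu> \<nu> \<and> sets \<nu> = sets \<mu>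
      then eexp \<mu> (\<lambda>x. f (enn2real (RN_deriv \<mu> \<nu> x))) else \<infinity>)"

definition eintegrable :: "'a measure \<Rightarrow> ('a \<Rightarrow> ereal) \<Rightarrow> bool" where
  "eintegrable M g \<longleftrightarrow> (AE x in M. \<bar>g x\<bar> \<noteq> \<infinity>) \<and> integrable M (\<lambda>x. real_of_ereal (g x))"

definition Lfpi :: "(real \<Rightarrow> ereal) \<Rightarrow> 'a measure \<Rightarrow> ('a \<Rightarrow> real) \<Rightarrow> ereal" where
  "Lfpi f \<pi> h = (if eintegrable \<pi> (\<lambda>x. fconj f (ereal (h x)))
     then ereal (\<integral>x. real_of_ereal (fconj f (ereal (h x))) \<partial>\<pi>) else \<infinity>)"

text \<open>Tilde D^*_{f,\<pi>}(h), with fs' a chosen (sub)derivative of f*.\<close>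
definition Dtil :: "(real \<Rightarrow> ereal) \<Rightarrow> (real \<Rightarrow> real) \<Rightarrow> 'a measure \<Rightarrow> ('a \<Rightarrow> real) \<Rightarrow> ereal" where
  "Dtil f fs' \<pi> h =
    (if \<not> eintegrable \<pi> (\<lambda>x. fconj f (ereal (h x))) then \<infinity>
     else if \<not> integrable \<pi> (\<lambda>x. fs' (h x)) then Lfpi f \<pi> h
     else (let m = (\<integral>x. fs' (h x) \<partial>\<pi>)
           in Lfpi f \<pi> h + fder f m - fconj f (fder f m)))"

definition conj_subgrad :: "(real \<Rightarrow> ereal) \<Rightarrow> (real \<Rightarrow> real) \<Rightarrow> bool" where
  "conj_subgrad f fs' \<longleftrightarrow> (\<forall>t. fconj f (ereal t) < \<infinity> \<longrightarrow>
      (\<forall>s. fconj f (ereal t) + ereal (fs' t * (s - t)) \<le> fconj f (ereal s)))"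

end

(*
  Let R = d nu / d pi and t = lam (h - c). Since E_nu[h] = E_pi[R h], it suffices to bound R t
  pointwise by an integrable function whose pi-integral is the right-hand side.

  For (ii) this is the Fenchel-Young inequality R t <= f*(t) + f(R).

  For (i), let y = f*'(t), so that f*(t) = y t - f(y) and R t - f(R) - f*(t) = -B(R, y), where
  B(x, y) = f(x) - f(y) - f'(y) (x - y) is the Bregman divergence of f. Since
  B(x, y) = int_0^1 (1 - s) (x - y)^2 f''(y + s (x - y)) ds and (u, p) |-> u^2 / w(p) is convex
  for concave w = 1/f'' > 0, B is jointly convex and lies above its tangent plane at (1, m),
  m = E_pi[y]. That plane is affine in (R, y), and E_pi[R] = 1, E_pi[y] = m, so its integral is
  B(1, m) = f*(f'(m)) - f'(m). Points with y = 0 or R = 0 are reached by continuity; if m = 0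
  then y = 0 almost everywhere, and f'(0) = inf f' replaces f'(m).
*)
theory Submission
  imports Defs
begin

section \<open>Joint convexity of the Bregman divergence\<close>

lemma convex_combination_pos:
  fixes a b t :: real
  assumes "a > 0" "b > 0" "0 \<le> t" "t \<le> 1"
  shows "(1 - t) * a + t * b > 0"
  using assms by (cases "t = 0") (auto intro: add_nonneg_pos)

lemma convex_combination_square_div_le:
  fixes a b q q1 q2 l :: real
  assumes q1: "q1 > 0" and q2: "q2 > 0" and l: "0 \<le> l" "l \<le> 1"
    and q: "q \<ge> (1 - l) * q1 + l * q2"
  shows "((1 - l) * a + l * b)^2 / q \<le> (1 - l) * a^2 / q1 + l * b^2 / q2"
proof -
  define Q where "Q = (1 - l) * q1 + l * q2"
  have Q: "Q > 0" unfolding Q_def using convex_combination_pos[OF q1 q2 l] .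
  have "0 \<le> (1 - l) * l * (a * q2 - b * q1)^2 / (q1 * q2)"
    using l q1 q2 by simp
  also have "\<dots> = ((1 - l) * a^2 / q1 + l * b^2 / q2) * Q - ((1 - l) * a + l * b)^2"
    unfolding Q_def using q1 q2 by (simp add: field_simps power2_eq_square)
  finally have "((1 - l) * a + l * b)^2 / Q \<le> (1 - l) * a^2 / q1 + l * b^2 / q2"
    using Q by (simp add: divide_le_eq)
  moreover have "((1 - l) * a + l * b)^2 / q \<le> ((1 - l) * a + l * b)^2 / Q"
    using q Q unfolding Q_def by (intro divide_left_mono) auto
  ultimately show ?thesis by linarith
qed

lemma concave_on_nonneg_vanishing:
  fixes w :: "real \<Rightarrow> real"
  assumes conc: "concave_on {0<..} w" and nonneg: "\<And>x. x > 0 \<Longrightarrow> w x \<ge> 0"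
    and p: "p > 0" "w p = 0" and q: "q > 0"
  shows "w q = 0"
proof -
  obtain r t where r: "r > 0" and t: "0 < t" "t < 1" and comb: "(1 - t) * q + t * r = p"
  proof (cases q p rule: linorder_cases)
    case less
    then show ?thesis using that[of "2 * p - q" "1 / 2"] p by (simp add: field_simps)
  next
    case equal
    then show ?thesis using that[of p "1 / 2"] p by (simp add: field_simps)
  next
    case greater
    then have "(1 - 2 * (q - p) / (2 * q - p)) * q + 2 * (q - p) / (2 * q - p) * (p / 2) = p"
      using p by (simp add: divide_simps) (simp add: algebra_simps)
    moreover have "0 < 2 * (q - p) / (2 * q - p)" "2 * (q - p) / (2 * q - p) < 1"
      using greater p by (simp_all add: field_simps)
    ultimately show ?thesis using that[of "p / 2"] p by simp
  qed
  have "(1 - t) * w q + t * w r \<le> w p"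
    using concave_onD[OF conc, of t q r] q r t comb by simp
  moreover have "t * w r \<ge> 0" using t nonneg[OF r] by simp
  ultimately have "(1 - t) * w q \<le> 0" using p by simp
  then show ?thesis using nonneg[OF q] t by (simp add: mult_le_0_iff)
qed

lemma convex_on_square_mult:
  fixes F'' :: "real \<Rightarrow> real"
  assumes nonneg: "\<And>x. x > 0 \<Longrightarrow> F'' x \<ge> 0"
    and conc: "concave_on {0<..} (\<lambda>x. 1 / F'' x)"
  shows "convex_on (UNIV \<times> {0<..}) (\<lambda>(u, p). u^2 * F'' p)"
proof (cases "\<exists>p>0. F'' p = 0")
  case True
  then obtain p where p: "p > 0" "F'' p = 0" by blast
  have "1 / F'' q = 0" if "q > 0" for q
    by (rule concave_on_nonneg_vanishing[OF conc, of p q]) (use nonneg p that in auto)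
  then have zero: "(\<lambda>(u, p). u^2 * F'' p) z = 0" if "z \<in> UNIV \<times> {0<..}" for z
    using that by auto
  have convex: "convex (UNIV \<times> {0::real<..})" by (intro convex_Times) auto
  show ?thesis
  proof (rule convex_onI[OF _ convex])
    fix l :: real and z1 z2 :: "real \<times> real"
    assume "0 < l" "l < 1" "z1 \<in> UNIV \<times> {0<..}" "z2 \<in> UNIV \<times> {0<..}"
    then show "(\<lambda>(u, p). u^2 * F'' p) ((1 - l) *\<^sub>R z1 + l *\<^sub>R z2)
        \<le> (1 - l) * (\<lambda>(u, p). u^2 * F'' p) z1 + l * (\<lambda>(u, p). u^2 * F'' p) z2"
      using convexD[OF convex, of z1 z2 "1 - l" l] zero by simp
  qed
next
  case False
  then have pos: "F'' p > 0" if "p > 0" for p using nonneg[OF that] that by force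
  show ?thesis
  proof (rule convex_onI)
    fix l :: real and z1 z2 :: "real \<times> real"
    assume l: "0 < l" "l < 1" and z: "z1 \<in> UNIV \<times> {0<..}" "z2 \<in> UNIV \<times> {0<..}"
    obtain u1 p1 u2 p2 where z12: "z1 = (u1, p1)" "z2 = (u2, p2)" and p12: "p1 > 0" "p2 > 0"
      using z by (cases z1, cases z2) auto
    have "(1 - l) * (1 / F'' p1) + l * (1 / F'' p2) \<le> 1 / F'' ((1 - l) * p1 + l * p2)"
      using concave_onD[OF conc, of l p1 p2] l p12 by simp
    then have "((1 - l) * u1 + l * u2)^2 / (1 / F'' ((1 - l) * p1 + l * p2))
        \<le> (1 - l) * u1^2 / (1 / F'' p1) + l * u2^2 / (1 / F'' p2)"
      using l p12 pos by (intro convex_combination_square_div_le) auto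
    then show "(\<lambda>(u, p). u^2 * F'' p) ((1 - l) *\<^sub>R z1 + l *\<^sub>R z2)
        \<le> (1 - l) * (\<lambda>(u, p). u^2 * F'' p) z1 + l * (\<lambda>(u, p). u^2 * F'' p) z2"
      unfolding z12 by simp
  qed (intro convex_Times; simp)
qed

definition bregman :: "(real \<Rightarrow> real) \<Rightarrow> (real \<Rightarrow> real) \<Rightarrow> real \<Rightarrow> real \<Rightarrow> real" where
  "bregman F F' x y = F x - F y - F' y * (x - y)"

lemma bregman_has_integral:
  fixes F F' F'' :: "real \<Rightarrow> real"
  assumes dF: "\<And>x. x > 0 \<Longrightarrow> (F has_real_derivative F' x) (at x)"
    and dF': "\<And>x. x > 0 \<Longrightarrow> (F' has_real_derivative F'' x) (at x)"
    and x: "x > 0" and y: "y > 0"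
  shows "((\<lambda>s. (1 - s) * (x - y)^2 * F'' (y + s * (x - y))) has_integral bregman F F' x y) {0..1}"
proof -
  define z where "z s = y + s * (x - y)" for s
  define \<rho> where "\<rho> s = (1 - s) * F' (z s) * (x - y) + F (z s)" for s
  have z_pos: "z s > 0" if "s \<in> {0..1}" for s
    using convex_combination_pos[of y x s] x y that unfolding z_def by (simp add: algebra_simps)
  have der: "(\<rho> has_real_derivative (1 - s) * (x - y)^2 * F'' (z s)) (at s)" if s: "s \<in> {0..1}" for s
  proof -
    have dz: "(z has_real_derivative (x - y)) (at s)"
      unfolding z_def by (auto intro!: derivative_eq_intros)
    have dF_z: "((\<lambda>s. F (z s)) has_real_derivative F' (z s) * (x - y)) (at s)"
      using DERIV_chain2[OF dF[OF z_pos[OF s]] dz] .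
    have dF'_z: "((\<lambda>s. F' (z s)) has_real_derivative F'' (z s) * (x - y)) (at s)"
      using DERIV_chain2[OF dF'[OF z_pos[OF s]] dz] .
    have "(\<rho> has_real_derivative
        ((0 - 1) * F' (z s) + F'' (z s) * (x - y) * (1 - s)) * (x - y) + F' (z s) * (x - y)) (at s)"
      unfolding \<rho>_def
      by (intro DERIV_add DERIV_cmult_right DERIV_mult dF_z dF'_z DERIV_diff DERIV_const DERIV_ident)
    then show ?thesis by (simp add: algebra_simps power2_eq_square)
  qed
  have "((\<lambda>s. (1 - s) * (x - y)^2 * F'' (z s)) has_integral (\<rho> 1 - \<rho> 0)) {0..1}"
  proof (rule fundamental_theorem_of_calculus)
    show "(\<rho> has_vector_derivative (1 - s) * (x - y)^2 * F'' (z s)) (at s within {0..1})"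
      if "s \<in> {0..1}" for s
      using has_field_derivative_at_within[OF der[OF that]]
      by (simp add: has_real_derivative_iff_has_vector_derivative)
  qed simp
  moreover have "\<rho> 1 - \<rho> 0 = bregman F F' x y" unfolding \<rho>_def z_def bregman_def by simp
  ultimately show ?thesis unfolding z_def by simp
qed

lemma convex_on_restrict_line:
  fixes g :: "'a::real_vector \<Rightarrow> real"
  assumes g: "convex_on S g"
  shows "convex_on {t. p + t *\<^sub>R d \<in> S} (\<lambda>t. g (p + t *\<^sub>R d))"
proof -
  have line: "p + ((1 - l) * s + l * t) *\<^sub>R d = (1 - l) *\<^sub>R (p + s *\<^sub>R d) + l *\<^sub>R (p + t *\<^sub>R d)"
    for l s t :: real
    by (simp add: algebra_simps)
  have S: "convex S" using convex_on_imp_convex[OF g] .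
  show ?thesis
  proof (rule convex_onI)
    fix l s t :: real assume "0 < l" "l < 1" "s \<in> {t. p + t *\<^sub>R d \<in> S}" "t \<in> {t. p + t *\<^sub>R d \<in> S}"
    then show "g (p + ((1 - l) *\<^sub>R s + l *\<^sub>R t) *\<^sub>R d)
        \<le> (1 - l) * g (p + s *\<^sub>R d) + l * g (p + t *\<^sub>R d)"
      using convex_onD[OF g, of l] by (simp add: line)
  next
    show "convex {t. p + t *\<^sub>R d \<in> S}"
    proof (rule convexI)
      fix s t u v :: real
      assume st: "s \<in> {t. p + t *\<^sub>R d \<in> S}" "t \<in> {t. p + t *\<^sub>R d \<in> S}"
        and uv: "0 \<le> u" "0 \<le> v" "u + v = 1"
      then have "u = 1 - v" by simp
      then have "p + (u * s + v * t) *\<^sub>R d = u *\<^sub>R (p + s *\<^sub>R d) + v *\<^sub>R (p + t *\<^sub>R d)"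
        using line[of v s t] by simp
      then show "u *\<^sub>R s + v *\<^sub>R t \<in> {t. p + t *\<^sub>R d \<in> S}"
        using convexD[OF S, of "p + s *\<^sub>R d" "p + t *\<^sub>R d" u v] st uv by simp
    qed
  qed
qed

lemma bregman_convex:
  fixes F F' F'' :: "real \<Rightarrow> real"
  assumes dF: "\<And>x. x > 0 \<Longrightarrow> (F has_real_derivative F' x) (at x)"
    and dF': "\<And>x. x > 0 \<Longrightarrow> (F' has_real_derivative F'' x) (at x)"
    and nonneg: "\<And>x. x > 0 \<Longrightarrow> F'' x \<ge> 0"
    and conc: "concave_on {0<..} (\<lambda>x. 1 / F'' x)"
  shows "convex_on ({0<..} \<times> {0<..}) (\<lambda>(x, y). bregman F F' x y)"
proof (rule convex_onI)
  fix l :: real and w1 w2 :: "real \<times> real"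
  assume l: "0 < l" "l < 1" and w: "w1 \<in> {0<..} \<times> {0<..}" "w2 \<in> {0<..} \<times> {0<..}"
  obtain x1 y1 x2 y2 where w12: "w1 = (x1, y1)" "w2 = (x2, y2)"
    and pos: "x1 > 0" "y1 > 0" "x2 > 0" "y2 > 0"
    using w by (cases w1, cases w2) auto
  define x where "x = (1 - l) * x1 + l * x2"
  define y where "y = (1 - l) * y1 + l * y2"
  have xy: "x > 0" "y > 0" unfolding x_def y_def using pos l by (auto intro: convex_combination_pos)
  define q where "q a b s = (1 - s) * (a - b)^2 * F'' (b + s * (a - b))" for a b s
  have q_le: "q x y s \<le> (1 - l) * q x1 y1 s + l * q x2 y2 s" if s: "s \<in> {0..1}" for s
  proof -
    have comb: "x - y = (1 - l) * (x1 - y1) + l * (x2 - y2)"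
      "y + s * (x - y) = (1 - l) * (y1 + s * (x1 - y1)) + l * (y2 + s * (x2 - y2))"
      unfolding x_def y_def by (simp_all add: algebra_simps)
    have "y1 + s * (x1 - y1) > 0" "y2 + s * (x2 - y2) > 0"
      using convex_combination_pos[of y1 x1 s] convex_combination_pos[of y2 x2 s] pos s
      by (simp_all add: algebra_simps)
    then have "(x - y)^2 * F'' (y + s * (x - y))
        \<le> (1 - l) * ((x1 - y1)^2 * F'' (y1 + s * (x1 - y1)))
          + l * ((x2 - y2)^2 * F'' (y2 + s * (x2 - y2)))"
      using convex_onD[OF convex_on_square_mult[OF nonneg conc], of l
          "(x1 - y1, y1 + s * (x1 - y1))" "(x2 - y2, y2 + s * (x2 - y2))"] l
      unfolding comb(2) unfolding comb(1) by simp
    then have "(1 - s) * ((x - y)^2 * F'' (y + s * (x - y)))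
        \<le> (1 - s) * ((1 - l) * ((x1 - y1)^2 * F'' (y1 + s * (x1 - y1)))
          + l * ((x2 - y2)^2 * F'' (y2 + s * (x2 - y2))))"
      using s by (intro mult_left_mono) auto
    then show ?thesis unfolding q_def by (simp add: algebra_simps)
  qed
  have "((\<lambda>s. (1 - l) * q x1 y1 s + l * q x2 y2 s)
      has_integral (1 - l) * bregman F F' x1 y1 + l * bregman F F' x2 y2) {0..1}"
    unfolding q_def using pos
    by (intro has_integral_add has_integral_mult_right bregman_has_integral[OF dF dF'])
  from has_integral_le[OF bregman_has_integral[OF dF dF' xy] this] q_le
  show "(\<lambda>(x, y). bregman F F' x y) ((1 - l) *\<^sub>R w1 + l *\<^sub>R w2)
      \<le> (1 - l) * (\<lambda>(x, y). bregman F F' x y) w1 + l * (\<lambda>(x, y). bregman F F' x y) w2"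
    unfolding w12 x_def y_def q_def by simp
qed (intro convex_Times; simp)

lemma bregman_ge_tangent_plane:
  fixes F F' F'' :: "real \<Rightarrow> real"
  assumes dF: "\<And>x. x > 0 \<Longrightarrow> (F has_real_derivative F' x) (at x)"
    and dF': "\<And>x. x > 0 \<Longrightarrow> (F' has_real_derivative F'' x) (at x)"
    and nonneg: "\<And>x. x > 0 \<Longrightarrow> F'' x \<ge> 0"
    and conc: "concave_on {0<..} (\<lambda>x. 1 / F'' x)"
    and pos: "x > 0" "y > 0" "x0 > 0" "y0 > 0"
  shows "bregman F F' x y
    \<ge> bregman F F' x0 y0 + (F' x0 - F' y0) * (x - x0) - F'' y0 * (x0 - y0) * (y - y0)"
proof -
  define X where "X t = x0 + t * (x - x0)" for t
  define Y where "Y t = y0 + t * (y - y0)" for t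
  define k where "k t = bregman F F' (X t) (Y t)" for t
  define J where "J = {t. (x0, y0) + t *\<^sub>R (x - x0, y - y0) \<in> {0<..} \<times> {0<..}}"
  have J: "J = {t. X t > 0 \<and> Y t > 0}" unfolding J_def X_def Y_def by auto
  have "convex_on J k"
    using convex_on_restrict_line[OF bregman_convex[OF dF dF' nonneg conc],
        of "(x0, y0)" "(x - x0, y - y0)"]
    unfolding J_def k_def X_def Y_def by simp
  moreover have "open J" unfolding J X_def Y_def
    by (intro open_Collect_conj open_Collect_less continuous_intros)
  moreover have "0 \<in> J" "1 \<in> J" unfolding J X_def Y_def using pos by auto
  moreover have "(k has_real_derivative
      (F' x0 - F' y0) * (x - x0) - F'' y0 * (x0 - y0) * (y - y0)) (at 0)"
  proof -
    have X0: "X 0 = x0" and Y0: "Y 0 = y0" unfolding X_def Y_def by simp_all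
    have dX: "(X has_real_derivative (x - x0)) (at 0)" and dY: "(Y has_real_derivative (y - y0)) (at 0)"
      unfolding X_def Y_def by (auto intro!: derivative_eq_intros)
    have "(k has_real_derivative F' (X 0) * (x - x0) - F' (Y 0) * (y - y0)
        - (F'' (Y 0) * (y - y0) * (X 0 - Y 0) + ((x - x0) - (y - y0)) * F' (Y 0))) (at 0)"
      unfolding k_def bregman_def
      using pos X0 Y0
      by (intro DERIV_diff DERIV_mult DERIV_chain2[OF dF] DERIV_chain2[OF dF'] dX dY) simp_all
    then show ?thesis unfolding X0 Y0 by (simp add: algebra_simps)
  qed
  ultimately have "(F' x0 - F' y0) * (x - x0) - F'' y0 * (x0 - y0) * (y - y0) \<le> k 1 - k 0"
    using convex_on_imp_above_tangent[of J k 0 1]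
    by (auto simp: interior_open convex_connected convex_on_imp_convex
        intro: has_field_derivative_at_within)
  then show ?thesis unfolding k_def X_def Y_def by simp
qed

section \<open>Convex functions of the class F and their conjugates\<close>

lemma fdivF_finite:
  assumes "fdivF f" "f x \<noteq> \<infinity>"
  shows "f x = ereal (freal f x)" and "x \<ge> 0"
proof -
  show "f x = ereal (freal f x)" using assms unfolding fdivF_def freal_def by (cases "f x") auto
  show "x \<ge> 0" using assms unfolding fdivF_def by (meson not_le)
qed

lemma fdivF_pos_finite:
  assumes "fdivF f" "x > 0"
  shows "f x = ereal (freal f x)"
  using assms fdivF_finite(1)[OF assms(1)] unfolding fdivF_def by blast

lemma fdivF_freal_one: "fdivF f \<Longrightarrow> freal f 1 = 0"
  unfolding fdivF_def freal_def by simp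

lemma fdivF_convex_on_dom:
  assumes f: "fdivF f"
  shows "convex_on {x. f x \<noteq> \<infinity>} (freal f)"
proof -
  have le: "f ((1 - t) * a + t * b) \<le> ereal ((1 - t) * freal f a + t * freal f b)"
    if "0 \<le> t" "t \<le> 1" "f a \<noteq> \<infinity>" "f b \<noteq> \<infinity>" for a b t
  proof -
    have "f ((1 - t) * a + t * b) \<le> ereal (1 - t) * f a + ereal t * f b"
      using f that unfolding fdivF_def ereal_convex_def by blast
    then show ?thesis using fdivF_finite(1)[OF f that(3)] fdivF_finite(1)[OF f that(4)] by simp
  qed
  have dom: "(1 - t) * a + t * b \<in> {x. f x \<noteq> \<infinity>}"
    if "0 \<le> t" "t \<le> 1" "a \<in> {x. f x \<noteq> \<infinity>}" "b \<in> {x. f x \<noteq> \<infinity>}" for a b t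
    using le[of t a b] that by auto
  show ?thesis
  proof (rule convex_onI)
    fix t a b :: real assume "0 < t" "t < 1" "a \<in> {x. f x \<noteq> \<infinity>}" "b \<in> {x. f x \<noteq> \<infinity>}"
    then show "freal f ((1 - t) *\<^sub>R a + t *\<^sub>R b) \<le> (1 - t) * freal f a + t * freal f b"
      using le[of t a b] dom[of t a b] fdivF_finite(1)[OF f, of "(1 - t) * a + t * b"] by simp
  next
    show "convex {x. f x \<noteq> \<infinity>}"
    proof (rule convexI)
      fix a b u v :: real
      assume ab: "a \<in> {x. f x \<noteq> \<infinity>}" "b \<in> {x. f x \<noteq> \<infinity>}"
        and uv: "0 \<le> u" "0 \<le> v" "u + v = 1"
      from uv(3) have u: "u = 1 - v" by simp
      show "u *\<^sub>R a + v *\<^sub>R b \<in> {x. f x \<noteq> \<infinity>}"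
        using dom[OF _ _ ab, of v] uv(1,2) unfolding u by simp
    qed
  qed
qed

lemma fdivF_ge_tangent:
  assumes f: "fdivF f" and z: "z > 0" and D: "(freal f has_real_derivative D) (at z)"
    and x: "f x \<noteq> \<infinity>"
  shows "freal f x \<ge> freal f z + D * (x - z)"
proof -
  let ?A = "{x. f x \<noteq> \<infinity>}"
  have "{0<..} \<subseteq> ?A" using fdivF_pos_finite[OF f] by auto
  then have "z \<in> interior ?A" using interior_maximal[of "{0<..}" ?A] z by auto
  then have "D * (x - z) \<le> freal f x - freal f z"
    using convex_on_imp_above_tangent[OF fdivF_convex_on_dom[OF f]] x D
      convex_connected[OF convex_on_imp_convex[OF fdivF_convex_on_dom[OF f]]]
    by (auto intro: has_field_derivative_at_within)
  then show ?thesis by simp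
qed

lemma fenchel_young: "x \<ge> 0 \<Longrightarrow> ereal x * t - f x \<le> fconj f t"
  unfolding fconj_def by (intro SUP_upper2[of x]) auto

lemma fconj_ge_self: "fdivF f \<Longrightarrow> ereal t \<le> fconj f (ereal t)"
  using fenchel_young[of 1 "ereal t" f] by (simp add: fdivF_def)

lemma fconj_finite:
  assumes "fdivF f" "fconj f (ereal t) \<noteq> \<infinity>"
  obtains p where "fconj f (ereal t) = ereal p"
  using assms fconj_ge_self[OF assms(1), of t] by (cases "fconj f (ereal t)") auto

lemma fenchel_young_real:
  assumes f: "fdivF f" and t: "fconj f (ereal t) \<noteq> \<infinity>" and x: "x \<ge> 0" "f x \<noteq> \<infinity>"
  shows "x * t \<le> real_of_ereal (fconj f (ereal t)) + freal f x"
proof -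
  obtain p where p: "fconj f (ereal t) = ereal p" using fconj_finite[OF f t] .
  show ?thesis
    using fenchel_young[OF x(1), of "ereal t" f] unfolding p fdivF_finite(1)[OF f x(2)] by simp
qed

lemma fconj_deriv:
  assumes f: "fdivF f" and z: "z > 0" and D: "(freal f has_real_derivative D) (at z)"
  shows "fconj f (ereal D) = ereal (z * D - freal f z)"
proof (rule antisym)
  have "ereal x * ereal D - f x \<le> ereal (z * D - freal f z)" for x
  proof (cases "f x = \<infinity>")
    case False
    then show ?thesis
      using fdivF_ge_tangent[OF f z D False] fdivF_finite(1)[OF f False] by (simp add: algebra_simps)
  qed simp
  then show "fconj f (ereal D) \<le> ereal (z * D - freal f z)"
    unfolding fconj_def by (intro SUP_least) auto
  show "ereal (z * D - freal f z) \<le> fconj f (ereal D)"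
    using fenchel_young[of z "ereal D" f] z fdivF_pos_finite[OF f z] by simp
qed

lemma fconj_mono:
  assumes f: "fdivF f" and "s \<le> t"
  shows "fconj f (ereal s) \<le> fconj f (ereal t)"
  unfolding fconj_def
proof (rule SUP_mono)
  fix x :: real assume x: "x \<in> {0..}"
  have "ereal x * ereal s - f x \<le> ereal x * ereal t - f x"
  proof (cases "f x")
    case (real r)
    then show ?thesis using x assms(2) by (simp add: mult_left_mono)
  qed (use f in \<open>auto simp: fdivF_def\<close>)
  then show "\<exists>y\<in>{0..}. ereal x * ereal s - f x \<le> ereal y * ereal t - f y" using x by blast
qed

lemma measurable_fdivF_comp:
  assumes f: "fdivF f" and R: "R \<in> borel_measurable M" and R_nonneg: "\<And>x. R x \<ge> 0"
  shows "(\<lambda>x. f (R x)) \<in> borel_measurable M"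
proof -
  have "convex_on {0<..} (freal f)"
    by (rule convex_on_subset[OF fdivF_convex_on_dom[OF f]]) (use fdivF_pos_finite[OF f] in auto)
  then have "continuous_on {0<..} (freal f)" by (rule convex_on_continuous[rotated]) simp
  then have "(\<lambda>x::real. if x \<in> {0<..} then ereal (freal f x) else f 0) \<in> borel_measurable borel"
    by (intro borel_measurable_continuous_on_if continuous_on_ereal) auto
  from measurable_compose[OF R this]
  have "(\<lambda>x. if R x \<in> {0<..} then ereal (freal f (R x)) else f 0) \<in> borel_measurable M" .
  moreover have "(\<lambda>x. if R x \<in> {0<..} then ereal (freal f (R x)) else f 0) = (\<lambda>x. f (R x))"
    using fdivF_pos_finite[OF f] R_nonneg by (auto simp: fun_eq_iff less_le)
  ultimately show ?thesis by simp
qed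

lemma fdivFcD:
  assumes "fdivFc f"
  shows "fdivF f" and "continuous_on {0..} f"
    and "\<And>x. x > 0 \<Longrightarrow> (freal f has_real_derivative deriv (freal f) x) (at x)"
    and "\<And>x. x > 0 \<Longrightarrow> (deriv (freal f) has_real_derivative deriv (deriv (freal f)) x) (at x)"
    and "concave_on {0<..} (\<lambda>x. 1 / deriv (deriv (freal f)) x)"
  using assms unfolding fdivFc_def by (auto simp: DERIV_deriv_iff_real_differentiable)

lemma fdivFc_deriv_mono:
  assumes f: "fdivFc f" and ab: "0 < a" "a \<le> b"
  shows "deriv (freal f) a \<le> deriv (freal f) b"
proof -
  have b: "b > 0" using ab by simp
  have "freal f b \<ge> freal f a + deriv (freal f) a * (b - a)"
    using fdivF_ge_tangent[OF fdivFcD(1)[OF f] ab(1) fdivFcD(3)[OF f ab(1)]]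
      fdivF_pos_finite[OF fdivFcD(1)[OF f] b] by simp
  moreover have "freal f a \<ge> freal f b + deriv (freal f) b * (a - b)"
    using fdivF_ge_tangent[OF fdivFcD(1)[OF f] b fdivFcD(3)[OF f b]]
      fdivF_pos_finite[OF fdivFcD(1)[OF f] ab(1)] by simp
  ultimately have "(deriv (freal f) b - deriv (freal f) a) * (b - a) \<ge> 0"
    by (simp add: algebra_simps)
  then show ?thesis using ab by (cases "a = b") (auto simp: zero_le_mult_iff)
qed

lemma fdivFc_deriv2_nonneg:
  assumes f: "fdivFc f" and x: "x > 0"
  shows "deriv (deriv (freal f)) x \<ge> 0"
proof (rule ccontr)
  assume "\<not> ?thesis"
  then obtain d where d: "d > 0"
    and dec: "\<And>h. h > 0 \<Longrightarrow> h < d \<Longrightarrow> deriv (freal f) x > deriv (freal f) (x + h)"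
    using DERIV_neg_dec_right[OF fdivFcD(4)[OF f x]] by force
  have "deriv (freal f) x \<le> deriv (freal f) (x + d / 2)"
    using fdivFc_deriv_mono[OF f x] d by simp
  with dec[of "d / 2"] d show False by simp
qed

lemma fdivFc_continuous_on:
  assumes f: "fdivFc f" and f0: "f 0 \<noteq> \<infinity>"
  shows "continuous_on {0..} (freal f)"
proof -
  have "\<bar>f x\<bar> \<noteq> \<infinity>" if "x \<in> {0..}" for x
    using fdivF_pos_finite[OF fdivFcD(1)[OF f], of x] f0 fdivF_finite(1)[OF fdivFcD(1)[OF f] f0] that
    by (cases "x = 0") auto
  then show ?thesis
    using continuous_on_iff_real[of "{0..}" f] fdivFcD(2)[OF f] unfolding freal_def comp_def by blast
qed

lemma fdivFc_tendsto_zero: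
  assumes "fdivFc f" and "f 0 \<noteq> \<infinity>"
  shows "(freal f \<longlongrightarrow> freal f 0) (at_right 0)"
proof -
  have "continuous_on {0..1} (freal f)"
    using continuous_on_subset[OF fdivFc_continuous_on[OF assms]] by auto
  then have "(freal f \<longlongrightarrow> freal f 0) (at 0 within {0..1})" unfolding continuous_on_def by auto
  moreover have "at (0::real) within {0..1} = at_right 0" by (rule at_within_Icc_at_right) simp
  ultimately show ?thesis by simp
qed

lemma fdivFc_finite_zero:
  assumes f: "fdivFc f" and bound: "\<And>z. z > 0 \<Longrightarrow> t \<le> deriv (freal f) z"
  shows "f 0 \<noteq> \<infinity>"
proof -
  have bounded: "f z \<le> ereal \<bar>t\<bar>" if z: "0 < z" "z < 1" for z
  proof -
    have "0 \<ge> freal f z + deriv (freal f) z * (1 - z)"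
      using fdivF_ge_tangent[OF fdivFcD(1)[OF f] z(1) fdivFcD(3)[OF f z(1)], of 1]
        fdivF_freal_one[OF fdivFcD(1)[OF f]] by (simp add: fdivFcD(1)[OF f, unfolded fdivF_def])
    moreover have "deriv (freal f) z * (1 - z) \<ge> - \<bar>t\<bar>"
    proof -
      have "deriv (freal f) z * (1 - z) \<ge> t * (1 - z)" using bound[OF z(1)] z by (simp add: mult_right_mono)
      moreover have "\<bar>t * (1 - z)\<bar> \<le> \<bar>t\<bar>" using z by (simp add: abs_mult mult_left_le)
      ultimately show ?thesis by linarith
    qed
    ultimately show ?thesis using fdivF_pos_finite[OF fdivFcD(1)[OF f] z(1)] by simp
  qed
  have "\<forall>\<^sub>F z in at_right 0. z < (1::real)"
    unfolding eventually_at_right_field by (intro exI[of _ 1]) auto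
  then have "\<forall>\<^sub>F z in at_right 0. f z \<le> ereal \<bar>t\<bar>"
    using eventually_at_right_less[of 0] by eventually_elim (use bounded in auto)
  moreover have "(f \<longlongrightarrow> f 0) (at_right 0)"
  proof -
    have "(f \<longlongrightarrow> f 0) (at 0 within {0..1})"
      using continuous_on_subset[OF fdivFcD(2)[OF f], of "{0..1}"] unfolding continuous_on_def by auto
    moreover have "at (0::real) within {0..1} = at_right 0" by (rule at_within_Icc_at_right) simp
    ultimately show ?thesis by simp
  qed
  ultimately have "f 0 \<le> ereal \<bar>t\<bar>"
    using tendsto_le[OF trivial_limit_at_right_real tendsto_const] by blast
  then show ?thesis by auto
qed

lemma fdivFc_ge_slope:
  assumes f: "fdivFc f" and f0: "f 0 \<noteq> \<infinity>" and y: "y \<ge> 0"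
    and bound: "\<And>z. z > 0 \<Longrightarrow> t \<le> deriv (freal f) z"
  shows "t * y \<le> freal f y - freal f 0"
proof (cases "y = 0")
  case False
  then have y: "y > 0" using y by simp
  have "continuous_on {0..y} (freal f)"
    using continuous_on_subset[OF fdivFc_continuous_on[OF f f0]] by auto
  moreover have "freal f differentiable at x" if "0 < x" for x
    using fdivFcD(3)[OF f that] by (auto simp: real_differentiable_def)
  ultimately obtain l z where z: "0 < z" "z < y"
    and l: "(freal f has_real_derivative l) (at z)" "freal f y - freal f 0 = (y - 0) * l"
    using MVT[OF y] by blast
  have "l = deriv (freal f) z" using DERIV_unique[OF l(1) fdivFcD(3)[OF f z(1)]] .
  then show ?thesis using l(2) bound[OF z(1)] y by (simp add: mult_left_mono mult.commute)
qed simp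

lemma fconj_le_inf_deriv:
  assumes f: "fdivFc f" and bound: "\<And>z. z > 0 \<Longrightarrow> d \<le> deriv (freal f) z"
  shows "fconj f (ereal d) = ereal (- freal f 0)"
proof (rule antisym)
  have f0: "f 0 \<noteq> \<infinity>" using fdivFc_finite_zero[OF f bound] .
  have "ereal x * ereal d - f x \<le> ereal (- freal f 0)" for x
  proof (cases "f x = \<infinity>")
    case False
    then show ?thesis
      using fdivFc_ge_slope[OF f f0 _ bound, of x] fdivF_finite[OF fdivFcD(1)[OF f] False]
      by (simp add: algebra_simps)
  qed simp
  then show "fconj f (ereal d) \<le> ereal (- freal f 0)"
    unfolding fconj_def by (intro SUP_least)
  show "ereal (- freal f 0) \<le> fconj f (ereal d)"
    using fenchel_young[of 0 "ereal d" f] fdivF_finite(1)[OF fdivFcD(1)[OF f] f0] by simp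
qed

lemma fder_zero_finite:
  assumes f: "fdivFc f" and bound: "\<And>z. z > 0 \<Longrightarrow> t \<le> deriv (freal f) z"
  obtains d where "fder f 0 = ereal d" and "\<And>z. z > 0 \<Longrightarrow> d \<le> deriv (freal f) z"
    and "\<And>s. (\<And>z. z > 0 \<Longrightarrow> s \<le> deriv (freal f) z) \<Longrightarrow> s \<le> d"
proof -
  define D where "D = (INF z\<in>{0<..}. ereal (deriv (freal f) z))"
  have D_le: "D \<le> ereal (deriv (freal f) z)" if "z > 0" for z
    unfolding D_def by (rule INF_lower) (use that in simp)
  have ge_D: "ereal s \<le> D" if "\<And>z. z > 0 \<Longrightarrow> s \<le> deriv (freal f) z" for s
    unfolding D_def by (rule INF_greatest) (use that in auto)
  obtain d where d: "D = ereal d"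
    using ge_D[OF bound] D_le[of 1] by (cases D) auto
  show ?thesis
  proof
    show "fder f 0 = ereal d" unfolding fder_def D_def[symmetric] d by simp
  qed (use D_le ge_D d in auto)
qed

section \<open>Subgradients of the conjugate and the pointwise bounds\<close>

lemma conj_subgradD:
  assumes "conj_subgrad f fs'" and "fconj f (ereal t) \<noteq> \<infinity>"
  shows "fconj f (ereal t) + ereal (fs' t * (s - t)) \<le> fconj f (ereal s)"
  using assms unfolding conj_subgrad_def by (simp add: less_top)

lemma conj_subgrad_nonneg:
  assumes f: "fdivF f" and sg: "conj_subgrad f fs'" and t: "fconj f (ereal t) \<noteq> \<infinity>"
  shows "fs' t \<ge> 0"
proof -
  obtain p where p: "fconj f (ereal t) = ereal p" using fconj_finite[OF f t] .
  have "ereal p + ereal (fs' t * ((t - 1) - t)) \<le> fconj f (ereal (t - 1))"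
    using conj_subgradD[OF sg t] unfolding p .
  also have "\<dots> \<le> ereal p" using fconj_mono[OF f, of "t - 1" t] unfolding p by simp
  finally show ?thesis by simp
qed

lemma conj_subgrad_sign:
  assumes f: "fdivFc f" and sg: "conj_subgrad f fs'" and t: "fconj f (ereal t) \<noteq> \<infinity>"
    and z: "z > 0"
  shows "(z - fs' t) * (deriv (freal f) z - t) \<ge> 0"
proof -
  obtain p where p: "fconj f (ereal t) = ereal p" using fconj_finite[OF fdivFcD(1)[OF f] t] .
  have "ereal p + ereal (fs' t * (deriv (freal f) z - t)) \<le> fconj f (ereal (deriv (freal f) z))"
    using conj_subgradD[OF sg t] unfolding p .
  also have "\<dots> = ereal (z * deriv (freal f) z - freal f z)"
    using fconj_deriv[OF fdivFcD(1)[OF f] z fdivFcD(3)[OF f z]] .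
  finally have "p + fs' t * (deriv (freal f) z - t) \<le> z * deriv (freal f) z - freal f z" by simp
  moreover have "z * t \<le> p + freal f z"
    using fenchel_young_real[OF fdivFcD(1)[OF f] t, of z] p fdivF_pos_finite[OF fdivFcD(1)[OF f] z] z
    by simp
  ultimately show ?thesis by (simp add: algebra_simps)
qed

lemma fdivFc_deriv_eq_of_sign:
  assumes f: "fdivFc f" and y: "y > 0"
    and sign: "\<And>z. z > 0 \<Longrightarrow> (z - y) * (deriv (freal f) z - t) \<ge> 0"
  shows "t = deriv (freal f) y"
proof -
  let ?D = "deriv (freal f)"
  have lim: "(?D \<longlongrightarrow> ?D y) (at y)"
    using DERIV_isCont[OF fdivFcD(4)[OF f y]] by (simp add: isCont_def)
  have "t \<le> ?D y"
  proof (rule tendsto_le[OF trivial_limit_at_right_real])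
    show "(?D \<longlongrightarrow> ?D y) (at_right y)" using tendsto_mono[OF at_le lim] by simp
    show "\<forall>\<^sub>F z in at_right y. t \<le> ?D z"
      using eventually_at_right_less[of y]
    proof (rule eventually_mono)
      fix z assume "y < z"
      then show "t \<le> ?D z" using sign[of z] y by (simp add: zero_le_mult_iff)
    qed
  qed simp
  moreover have "?D y \<le> t"
  proof (rule tendsto_le[OF trivial_limit_at_left_real])
    show "(?D \<longlongrightarrow> ?D y) (at_left y)" using tendsto_mono[OF at_le lim] by simp
    have "\<forall>\<^sub>F z in at_left y. z > 0"
      using y unfolding eventually_at_left_field by (intro exI[of _ 0]) auto
    moreover have "\<forall>\<^sub>F z in at_left y. z < y" by (simp add: eventually_at_filter)
    ultimately show "\<forall>\<^sub>F z in at_left y. ?D z \<le> t"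
    proof eventually_elim
      case (elim z)
      then show "?D z \<le> t" using sign[of z] by (simp add: zero_le_mult_iff)
    qed
  qed simp
  ultimately show ?thesis by simp
qed

text \<open>Here t stands for f'(y): the sign condition forces t = f'(y) if y > 0, and
  t \<le> inf f' if y = 0.\<close>

lemma fdivFc_tangent_plane_le_pos:
  assumes f: "fdivFc f" and m: "m > 0" and x: "x > 0" and y: "y \<ge> 0" "f y \<noteq> \<infinity>"
    and sign: "\<And>z. z > 0 \<Longrightarrow> (z - y) * (deriv (freal f) z - t) \<ge> 0"
  shows "bregman (freal f) (deriv (freal f)) 1 m + (deriv (freal f) 1 - deriv (freal f) m) * (x - 1)
      - deriv (deriv (freal f)) m * (1 - m) * (y - m) \<le> freal f x - freal f y - t * (x - y)"
proof -
  define F where "F = freal f"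
  define F' where "F' = deriv F"
  define P where "P y = bregman F F' 1 m + (F' 1 - F' m) * (x - 1) - deriv F' m * (1 - m) * (y - m)"
    for y
  have tangent: "P y' \<le> F x - F y' - F' y' * (x - y')" if "y' > 0" for y'
    using bregman_ge_tangent_plane[OF fdivFcD(3,4)[OF f] fdivFc_deriv2_nonneg[OF f]
        fdivFcD(5)[OF f] x that _ m, of 1]
    unfolding P_def F'_def F_def bregman_def by simp
  have "P y \<le> F x - F y - t * (x - y)"
  proof (cases "y > 0")
    case True
    then show ?thesis
      using tangent fdivFc_deriv_eq_of_sign[OF f True sign] unfolding F'_def F_def by simp
  next
    case False
    then have y0: "y = 0" using y by simp
    have bound: "t \<le> F' z" if "z > 0" for z
      using sign[OF that] that y0 unfolding F'_def F_def by (simp add: zero_le_mult_iff)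
    have f0: "f 0 \<noteq> \<infinity>" using y y0 by simp
    have "P 0 \<le> F x - F 0 - t * x"
    proof (rule tendsto_le[OF trivial_limit_at_right_real tendsto_const])
      show "(P \<longlongrightarrow> P 0) (at_right 0)" unfolding P_def by (intro tendsto_intros)
      have "\<forall>\<^sub>F y' in at_right 0. y' < x"
        unfolding eventually_at_right_field using x by blast
      then show "\<forall>\<^sub>F y' in at_right 0. P y' \<le> F x - F 0 - t * x"
        using eventually_at_right_less[of 0]
      proof eventually_elim
        case (elim y')
        have "t * y' \<le> F y' - F 0"
          using fdivFc_ge_slope[OF f f0 _ bound[unfolded F'_def F_def], of y'] elim
          unfolding F_def by simp
        moreover have "(F' y' - t) * (x - y') \<ge> 0" using bound[OF elim(2)] elim by simp
        ultimately show ?case using tangent[OF elim(2)] by (simp add: algebra_simps)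
      qed
    qed
    then show ?thesis using y0 by simp
  qed
  then show ?thesis unfolding P_def F'_def F_def .
qed

lemma fdivFc_tangent_plane_le:
  assumes f: "fdivFc f" and m: "m > 0"
    and x: "x \<ge> 0" "f x \<noteq> \<infinity>" and y: "y \<ge> 0" "f y \<noteq> \<infinity>"
    and sign: "\<And>z. z > 0 \<Longrightarrow> (z - y) * (deriv (freal f) z - t) \<ge> 0"
  shows "bregman (freal f) (deriv (freal f)) 1 m + (deriv (freal f) 1 - deriv (freal f) m) * (x - 1)
      - deriv (deriv (freal f)) m * (1 - m) * (y - m) \<le> freal f x - freal f y - t * (x - y)"
    (is "?P x \<le> ?B x")
proof (cases "x > 0")
  case True
  then show ?thesis using fdivFc_tangent_plane_le_pos[OF f m _ y sign] by simp
next
  case False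
  then have x0: "x = 0" using x by simp
  have "?P 0 \<le> ?B 0"
  proof (rule tendsto_le[OF trivial_limit_at_right_real])
    show "(?B \<longlongrightarrow> ?B 0) (at_right 0)"
      using fdivFc_tendsto_zero[OF f] x x0 by (intro tendsto_intros) auto
    show "(?P \<longlongrightarrow> ?P 0) (at_right 0)" by (intro tendsto_intros)
    show "\<forall>\<^sub>F x' in at_right 0. ?P x' \<le> ?B x'"
      using eventually_at_right_less[of 0]
      by (rule eventually_mono) (rule fdivFc_tangent_plane_le_pos[OF f m _ y sign])
  qed
  then show ?thesis using x0 by simp
qed

lemma conj_subgrad_pointwise_bound:
  assumes f: "fdivFc f" and sg: "conj_subgrad f fs'" and m: "m > 0"
    and t: "fconj f (ereal t) \<noteq> \<infinity>" and x: "x \<ge> 0" "f x \<noteq> \<infinity>"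
  shows "x * t \<le> real_of_ereal (fconj f (ereal t)) + freal f x
    - bregman (freal f) (deriv (freal f)) 1 m - (deriv (freal f) 1 - deriv (freal f) m) * (x - 1)
    + deriv (deriv (freal f)) m * (1 - m) * (fs' t - m)"
proof -
  define y where "y = fs' t"
  have y: "y \<ge> 0" unfolding y_def using conj_subgrad_nonneg[OF fdivFcD(1)[OF f] sg t] .
  have sign: "(z - y) * (deriv (freal f) z - t) \<ge> 0" if "z > 0" for z
    unfolding y_def using conj_subgrad_sign[OF f sg t that] .
  have fy: "f y \<noteq> \<infinity>"
  proof (cases "y = 0")
    case True
    then show ?thesis
      using fdivFc_finite_zero[OF f, of t] sign by (simp add: zero_le_mult_iff)
  qed (use y fdivF_pos_finite[OF fdivFcD(1)[OF f]] in auto)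
  have "y * t \<le> real_of_ereal (fconj f (ereal t)) + freal f y"
    using fenchel_young_real[OF fdivFcD(1)[OF f] t y fy] .
  moreover note fdivFc_tangent_plane_le[OF f m x y fy sign]
  ultimately show ?thesis unfolding y_def by (simp add: algebra_simps)
qed

lemma conj_subgrad_pointwise_bound_zero:
  assumes f: "fdivFc f" and sg: "conj_subgrad f fs'"
    and t: "fconj f (ereal t) \<noteq> \<infinity>" "fs' t = 0" and x: "x \<ge> 0" "f x \<noteq> \<infinity>"
    and d: "t \<le> d"
  shows "x * t \<le> real_of_ereal (fconj f (ereal t)) + freal f x
    + (d + freal f 0) - (deriv (freal f) 1 - d) * (x - 1)"
proof -
  have "t \<le> deriv (freal f) z" if "z > 0" for z
    using conj_subgrad_sign[OF f sg t(1) that] t(2) that by (simp add: zero_le_mult_iff)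
  then have f0: "f 0 \<noteq> \<infinity>" by (rule fdivFc_finite_zero[OF f])
  have "0 \<le> real_of_ereal (fconj f (ereal t)) + freal f 0"
    using fenchel_young_real[OF fdivFcD(1)[OF f] t(1) _ f0] by simp
  moreover have "freal f x \<ge> deriv (freal f) 1 * (x - 1)"
    using fdivF_ge_tangent[OF fdivFcD(1)[OF f] _ fdivFcD(3)[OF f] x(2), of 1]
      fdivF_freal_one[OF fdivFcD(1)[OF f]] by simp
  moreover have "x * t \<le> x * d" using x d by (simp add: mult_left_mono)
  ultimately show ?thesis by (simp add: algebra_simps)
qed

lemma Dtil_pointwise_bound:
  assumes f: "fdivFc f" and sg: "conj_subgrad f fs'" and m: "m \<ge> 0"
    and zero: "m = 0 \<Longrightarrow> \<exists>t. fconj f (ereal t) \<noteq> \<infinity> \<and> fs' t = 0"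
  obtains K a b where "fder f m - fconj f (fder f m) = ereal K"
    and "\<And>t x. fconj f (ereal t) \<noteq> \<infinity> \<Longrightarrow> x \<ge> 0 \<Longrightarrow> f x \<noteq> \<infinity> \<Longrightarrow> (m = 0 \<Longrightarrow> fs' t = 0) \<Longrightarrow>
      x * t \<le> real_of_ereal (fconj f (ereal t)) + freal f x + K - a * (x - 1) - b * (fs' t - m)"
proof (cases "m > 0")
  case True
  define F' where "F' = deriv (freal f)"
  have "fder f m - fconj f (fder f m) = ereal (F' m - (m * F' m - freal f m))"
    using fconj_deriv[OF fdivFcD(1)[OF f] True fdivFcD(3)[OF f True]] True
    unfolding fder_def F'_def by simp
  also have "F' m - (m * F' m - freal f m) = - bregman (freal f) F' 1 m"
    using fdivF_freal_one[OF fdivFcD(1)[OF f]] unfolding bregman_def by (simp add: algebra_simps)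
  finally show ?thesis
    using that[of _ "F' 1 - F' m" "- deriv F' m * (1 - m)"]
      conj_subgrad_pointwise_bound[OF f sg True] unfolding F'_def by simp
next
  case False
  then have m0: "m = 0" using m by simp
  then obtain t0 where t0: "fconj f (ereal t0) \<noteq> \<infinity>" "fs' t0 = 0" using zero by blast
  have "t0 \<le> deriv (freal f) z" if "z > 0" for z
    using conj_subgrad_sign[OF f sg t0(1) that] t0(2) that by (simp add: zero_le_mult_iff)
  then obtain d where d: "fder f 0 = ereal d" "\<And>z. z > 0 \<Longrightarrow> d \<le> deriv (freal f) z"
    and d_greatest: "\<And>s. (\<And>z. z > 0 \<Longrightarrow> s \<le> deriv (freal f) z) \<Longrightarrow> s \<le> d"
    using fder_zero_finite[OF f] by metis
  have "fder f m - fconj f (fder f m) = ereal (d + freal f 0)"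
    using fconj_le_inf_deriv[OF f d(2)] unfolding m0 d(1) by simp
  moreover have "t \<le> d" if "fconj f (ereal t) \<noteq> \<infinity>" "fs' t = 0" for t
    using d_greatest conj_subgrad_sign[OF f sg that(1)] that(2) by (simp add: zero_le_mult_iff)
  ultimately show ?thesis
    using that[of "d + freal f 0" "deriv (freal f) 1 - d" 0]
      conj_subgrad_pointwise_bound_zero[OF f sg] m0 by simp
qed

section \<open>Change of measure\<close>

lemma eexp_cong_AE: "AE x in M. g x = g' x \<Longrightarrow> eexp M g = eexp M g'"
  unfolding eexp_def by (metis (mono_tags, lifting) AE_mp AE_I2 nn_integral_cong_AE)

lemma enn2ereal_eq_ereal_enn2real: "x < top \<Longrightarrow> enn2ereal x = ereal (enn2real x)"
  by (metis ennreal_enn2real enn2ereal_ennreal enn2real_nonneg)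

lemma eexp_real:
  assumes "integrable M G"
  shows "eexp M (\<lambda>x. ereal (G x)) = ereal (integral\<^sup>L M G)"
proof -
  have "(\<integral>\<^sup>+ x. ennreal (G x) \<partial>M) < \<infinity>" "(\<integral>\<^sup>+ x. ennreal (- G x) \<partial>M) < \<infinity>"
    using assms unfolding real_integrable_def by (auto simp: less_top)
  then show ?thesis
    unfolding eexp_def real_lebesgue_integral_def[OF assms]
    by (simp add: enn2ereal_eq_ereal_enn2real)
qed

lemma eexp_le_integral:
  assumes u[measurable]: "u \<in> borel_measurable M" and G: "integrable M G"
    and le: "AE x in M. u x \<le> G x"
  shows "eexp M (\<lambda>x. ereal (u x)) \<le> ereal (integral\<^sup>L M G)"
proof -
  have "(\<integral>\<^sup>+ x. ennreal (u x) \<partial>M) \<le> (\<integral>\<^sup>+ x. ennreal (G x) \<partial>M)"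
    using le by (intro nn_integral_mono_AE) (auto intro: ennreal_leI)
  also have "\<dots> < \<infinity>" using G unfolding real_integrable_def by (auto simp: less_top)
  finally have pos: "(\<integral>\<^sup>+ x. ennreal (u x) \<partial>M) < \<infinity>" .
  show ?thesis
  proof (cases "(\<integral>\<^sup>+ x. ennreal (- u x) \<partial>M) = \<infinity>")
    case True
    then show ?thesis using pos unfolding eexp_def by (simp add: enn2ereal_eq_ereal_enn2real)
  next
    case False
    then have "integrable M u" using pos unfolding real_integrable_def by simp
    then show ?thesis using eexp_real[of M u] integral_mono_AE[OF _ G le] by simp
  qed
qed

lemma nn_integral_RN_deriv_real:
  assumes \<pi>: "sigma_finite_measure \<pi>" and \<nu>: "sigma_finite_measure \<nu>"
    and sets: "sets \<nu> = sets \<pi>" and ac: "absolutely_continuous \<pi> \<nu>"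
    and g[measurable]: "g \<in> borel_measurable \<pi>"
  shows "(\<integral>\<^sup>+ x. ennreal (g x) \<partial>\<nu>) = (\<integral>\<^sup>+ x. ennreal (enn2real (RN_deriv \<pi> \<nu> x) * g x) \<partial>\<pi>)"
proof -
  interpret sigma_finite_measure \<pi> by fact
  have "(\<integral>\<^sup>+ x. ennreal (g x) \<partial>\<nu>) = (\<integral>\<^sup>+ x. ennreal (g x) \<partial>density \<pi> (RN_deriv \<pi> \<nu>))"
    using density_RN_deriv[OF ac sets] by simp
  also have "\<dots> = (\<integral>\<^sup>+ x. RN_deriv \<pi> \<nu> x * ennreal (g x) \<partial>\<pi>)"
    by (simp add: nn_integral_density)
  also have "\<dots> = (\<integral>\<^sup>+ x. ennreal (enn2real (RN_deriv \<pi> \<nu> x) * g x) \<partial>\<pi>)"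
    using RN_deriv_finite[OF \<nu> ac sets]
    by (intro nn_integral_cong_AE) (auto simp: ennreal_mult' less_top elim!: eventually_mono)
  finally show ?thesis .
qed

lemma eexp_RN_deriv:
  assumes \<pi>: "sigma_finite_measure \<pi>" and \<nu>: "sigma_finite_measure \<nu>"
    and sets: "sets \<nu> = sets \<pi>" and ac: "absolutely_continuous \<pi> \<nu>"
    and h[measurable]: "h \<in> borel_measurable \<pi>"
  shows "eexp \<nu> (\<lambda>x. ereal (h x)) = eexp \<pi> (\<lambda>x. ereal (enn2real (RN_deriv \<pi> \<nu> x) * h x))"
  using nn_integral_RN_deriv_real[OF assms] nn_integral_RN_deriv_real[OF \<pi> \<nu> sets ac, of "\<lambda>x. - h x"]
  unfolding eexp_def by simp

lemma RN_deriv_real_integral: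
  assumes \<pi>: "prob_space \<pi>" and \<nu>: "prob_space \<nu>"
    and sets: "sets \<nu> = sets \<pi>" and ac: "absolutely_continuous \<pi> \<nu>"
  shows "integrable \<pi> (\<lambda>x. enn2real (RN_deriv \<pi> \<nu> x))"
    and "(\<integral>x. enn2real (RN_deriv \<pi> \<nu> x) \<partial>\<pi>) = 1"
proof -
  have "(\<integral>\<^sup>+ x. ennreal (enn2real (RN_deriv \<pi> \<nu> x)) \<partial>\<pi>) = ennreal 1"
    using nn_integral_RN_deriv_real[OF prob_space_imp_sigma_finite[OF \<pi>]
        prob_space_imp_sigma_finite[OF \<nu>] sets ac, of "\<lambda>_. 1"]
      prob_space.emeasure_space_1[OF \<nu>] by simp
  then show "integrable \<pi> (\<lambda>x. enn2real (RN_deriv \<pi> \<nu> x))"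
    and "(\<integral>x. enn2real (RN_deriv \<pi> \<nu> x) \<partial>\<pi>) = 1"
    by (auto intro: integrableI_nn_integral_finite simp: integral_eq_nn_integral)
qed

lemma eexp_eq_integral:
  assumes u[measurable]: "u \<in> borel_measurable M" and B: "integrable M B"
    and lower: "AE x in M. - B x \<le> u x" and fin: "eexp M (\<lambda>x. ereal (u x)) \<noteq> \<infinity>"
  shows "integrable M u" and "eexp M (\<lambda>x. ereal (u x)) = ereal (integral\<^sup>L M u)"
proof -
  have "(\<integral>\<^sup>+ x. ennreal (- u x) \<partial>M) \<le> (\<integral>\<^sup>+ x. ennreal (B x) \<partial>M)"
    using lower by (intro nn_integral_mono_AE) (auto intro: ennreal_leI elim!: eventually_mono)
  also have "\<dots> < \<infinity>" using B unfolding real_integrable_def by (auto simp: less_top)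
  finally have neg: "(\<integral>\<^sup>+ x. ennreal (- u x) \<partial>M) < \<infinity>" .
  moreover have "(\<integral>\<^sup>+ x. ennreal (u x) \<partial>M) < \<infinity>"
    using fin neg unfolding eexp_def
    by (cases "(\<integral>\<^sup>+ x. ennreal (u x) \<partial>M) = \<infinity>") (auto simp: less_top enn2ereal_eq_ereal_enn2real)
  ultimately show "integrable M u" unfolding real_integrable_def by (simp add: less_top)
  then show "eexp M (\<lambda>x. ereal (u x)) = ereal (integral\<^sup>L M u)" by (rule eexp_real)
qed

lemma fdiv_eq_integral:
  assumes \<pi>: "prob_space \<pi>" and \<nu>: "prob_space \<nu>"
    and sets: "sets \<nu> = sets \<pi>" and ac: "absolutely_continuous \<pi> \<nu>"
    and f: "fdivF f" and t: "fconj f (ereal t) \<noteq> \<infinity>" and D: "fdiv f \<nu> \<pi> \<noteq> \<infinity>"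
  shows "AE x in \<pi>. f (enn2real (RN_deriv \<pi> \<nu> x)) \<noteq> \<infinity>"
    and "integrable \<pi> (\<lambda>x. freal f (enn2real (RN_deriv \<pi> \<nu> x)))"
    and "fdiv f \<nu> \<pi> = ereal (\<integral>x. freal f (enn2real (RN_deriv \<pi> \<nu> x)) \<partial>\<pi>)"
proof -
  interpret \<pi>: prob_space \<pi> by fact
  define R where "R x = enn2real (RN_deriv \<pi> \<nu> x)" for x
  have R[measurable]: "R \<in> borel_measurable \<pi>" unfolding R_def by simp
  have fR[measurable]: "(\<lambda>x. f (R x)) \<in> borel_measurable \<pi>"
    using measurable_fdivF_comp[OF f R] unfolding R_def by simp
  have fdiv: "fdiv f \<nu> \<pi> = eexp \<pi> (\<lambda>x. f (R x))" unfolding fdiv_def R_def using ac sets by simp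
  have "(\<integral>\<^sup>+ x. e2ennreal (f (R x)) \<partial>\<pi>) \<noteq> \<infinity>"
    using D unfolding fdiv eexp_def by auto
  then have "AE x in \<pi>. e2ennreal (f (R x)) \<noteq> \<infinity>" by (intro nn_integral_PInf_AE) simp_all
  then show fin: "AE x in \<pi>. f (enn2real (RN_deriv \<pi> \<nu> x)) \<noteq> \<infinity>"
    unfolding R_def by (auto elim!: eventually_mono)
  have eq: "fdiv f \<nu> \<pi> = eexp \<pi> (\<lambda>x. ereal (freal f (R x)))"
    unfolding fdiv using fin unfolding R_def
    by (intro eexp_cong_AE) (auto elim!: eventually_mono intro: fdivF_finite(1)[OF f])
  have lower: "AE x in \<pi>. - (\<bar>real_of_ereal (fconj f (ereal t))\<bar> + \<bar>t\<bar> * R x) \<le> freal f (R x)"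
    using fin
  proof eventually_elim
    case (elim x)
    have "R x * t \<le> real_of_ereal (fconj f (ereal t)) + freal f (R x)"
      using fenchel_young_real[OF f t _ elim] unfolding R_def by simp
    moreover have "- (\<bar>t\<bar> * R x) \<le> R x * t"
      using mult_left_mono[of "- \<bar>t\<bar>" t "R x"] unfolding R_def by (simp add: mult.commute)
    ultimately show ?case by linarith
  qed
  have B: "integrable \<pi> (\<lambda>x. \<bar>real_of_ereal (fconj f (ereal t))\<bar> + \<bar>t\<bar> * R x)"
    using RN_deriv_real_integral(1)[OF \<pi> \<nu> sets ac] unfolding R_def by simp
  have "(\<lambda>x. freal f (R x)) \<in> borel_measurable \<pi>" unfolding freal_def by simp
  note integral = eexp_eq_integral[OF this B lower D[unfolded eq]]
  show "integrable \<pi> (\<lambda>x. freal f (enn2real (RN_deriv \<pi> \<nu> x)))"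
    using integral(1) unfolding R_def .
  show "fdiv f \<nu> \<pi> = ereal (\<integral>x. freal f (enn2real (RN_deriv \<pi> \<nu> x)) \<partial>\<pi>)"
    using integral(2) unfolding eq R_def .
qed

lemma eexp_le_of_pointwise_bound:
  assumes \<pi>: "prob_space \<pi>" and \<nu>: "prob_space \<nu>"
    and sets: "sets \<nu> = sets \<pi>" and ac: "absolutely_continuous \<pi> \<nu>"
    and h[measurable]: "h \<in> borel_measurable \<pi>" and lam: "lam > 0" and W: "integrable \<pi> W"
    and le: "AE x in \<pi>. enn2real (RN_deriv \<pi> \<nu> x) * (lam * (h x - c)) \<le> W x"
  shows "eexp \<nu> (\<lambda>x. ereal (h x)) \<le> ereal (1 / lam) * ereal (\<integral>x. W x \<partial>\<pi>) + ereal c"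
proof -
  define R where "R x = enn2real (RN_deriv \<pi> \<nu> x)" for x
  note R = RN_deriv_real_integral[OF \<pi> \<nu> sets ac, folded R_def]
  have "eexp \<nu> (\<lambda>x. ereal (h x)) = eexp \<pi> (\<lambda>x. ereal (R x * h x))"
    unfolding R_def using eexp_RN_deriv[OF prob_space_imp_sigma_finite[OF \<pi>]
      prob_space_imp_sigma_finite[OF \<nu>] sets ac h] .
  also have "\<dots> \<le> ereal (\<integral>x. c * R x + W x / lam \<partial>\<pi>)"
  proof (rule eexp_le_integral)
    show "integrable \<pi> (\<lambda>x. c * R x + W x / lam)" using R(1) W by simp
    show "AE x in \<pi>. R x * h x \<le> c * R x + W x / lam"
      using le unfolding R_def
      by eventually_elim (use lam in \<open>simp add: field_simps\<close>)
  qed (simp add: R_def)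
  also have "(\<integral>x. c * R x + W x / lam \<partial>\<pi>) = c + (\<integral>x. W x \<partial>\<pi>) / lam"
    using R W by simp
  finally show ?thesis by (simp add: add.commute)
qed

lemma eintegrable_fconj:
  assumes \<pi>: "prob_space \<pi>" and int: "eintegrable \<pi> (\<lambda>x. fconj f (ereal (g x)))"
  shows "AE x in \<pi>. fconj f (ereal (g x)) \<noteq> \<infinity>"
    and "integrable \<pi> (\<lambda>x. real_of_ereal (fconj f (ereal (g x))))"
    and "\<exists>t. fconj f (ereal t) \<noteq> \<infinity>"
proof -
  show fin: "AE x in \<pi>. fconj f (ereal (g x)) \<noteq> \<infinity>"
    using int unfolding eintegrable_def by (auto elim!: eventually_mono)
  show "integrable \<pi> (\<lambda>x. real_of_ereal (fconj f (ereal (g x))))"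
    using int unfolding eintegrable_def by simp
  show "\<exists>t. fconj f (ereal t) \<noteq> \<infinity>"
    using eventually_happens'[OF prob_space.ae_filter_bot[OF \<pi>] fin] by blast
qed

lemma eexp_le_Lfpi:
  assumes \<pi>: "prob_space \<pi>" and \<nu>: "prob_space \<nu>"
    and sets: "sets \<nu> = sets \<pi>" and ac: "absolutely_continuous \<pi> \<nu>"
    and f: "fdivF f" and lam: "lam > 0" and h: "h \<in> borel_measurable \<pi>"
  shows "eexp \<nu> (\<lambda>x. ereal (h x))
    \<le> ereal (1 / lam) * Lfpi f \<pi> (\<lambda>x. lam * (h x - c)) + ereal c + ereal (1 / lam) * fdiv f \<nu> \<pi>"
proof (cases "eintegrable \<pi> (\<lambda>x. fconj f (ereal (lam * (h x - c)))) \<and> fdiv f \<nu> \<pi> \<noteq> \<infinity>")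
  case False
  then show ?thesis using lam unfolding Lfpi_def by auto
next
  case True
  define g where "g x = lam * (h x - c)" for x
  define R where "R x = enn2real (RN_deriv \<pi> \<nu> x)" for x
  have "eintegrable \<pi> (\<lambda>x. fconj f (ereal (g x)))" using True unfolding g_def by simp
  note conj = eintegrable_fconj[OF \<pi> this]
  obtain t where t: "fconj f (ereal t) \<noteq> \<infinity>" using conj(3) by blast
  note D = fdiv_eq_integral[OF \<pi> \<nu> sets ac f t True[THEN conjunct2], folded R_def]
  define W where "W x = real_of_ereal (fconj f (ereal (g x))) + freal f (R x)" for x
  have W: "integrable \<pi> W" unfolding W_def using conj(2) D(2) by simp
  have "AE x in \<pi>. R x * (lam * (h x - c)) \<le> W x"
    using conj(1) D(1) unfolding W_def g_def R_def
    by eventually_elim (rule fenchel_young_real[OF f]; simp)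
  then have "eexp \<nu> (\<lambda>x. ereal (h x)) \<le> ereal (1 / lam) * ereal (\<integral>x. W x \<partial>\<pi>) + ereal c"
    using eexp_le_of_pointwise_bound[OF \<pi> \<nu> sets ac h lam W] unfolding R_def by simp
  moreover have "Lfpi f \<pi> (\<lambda>x. lam * (h x - c)) = ereal (\<integral>x. real_of_ereal (fconj f (ereal (g x))) \<partial>\<pi>)"
    using True unfolding Lfpi_def g_def by simp
  ultimately show ?thesis
    unfolding D(3) W_def using conj(2) D(2) by (simp add: add_divide_distrib add_ac)
qed

lemma integral_conj_subgrad:
  assumes \<pi>: "prob_space \<pi>" and f: "fdivF f" and sg: "conj_subgrad f fs'"
    and fin: "AE x in \<pi>. fconj f (ereal (g x)) \<noteq> \<infinity>" and int: "integrable \<pi> (\<lambda>x. fs' (g x))"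
  shows "(\<integral>x. fs' (g x) \<partial>\<pi>) \<ge> 0"
    and "(\<integral>x. fs' (g x) \<partial>\<pi>) = 0 \<Longrightarrow> \<exists>t. fconj f (ereal t) \<noteq> \<infinity> \<and> fs' t = 0"
    and "AE x in \<pi>. (\<integral>x. fs' (g x) \<partial>\<pi>) = 0 \<longrightarrow> fs' (g x) = 0"
proof -
  have nonneg: "AE x in \<pi>. fs' (g x) \<ge> 0"
    using fin by eventually_elim (rule conj_subgrad_nonneg[OF f sg])
  then show "(\<integral>x. fs' (g x) \<partial>\<pi>) \<ge> 0" by (rule integral_nonneg_AE)
  show zero: "AE x in \<pi>. (\<integral>x. fs' (g x) \<partial>\<pi>) = 0 \<longrightarrow> fs' (g x) = 0"
    using integral_nonneg_eq_0_iff_AE[OF int nonneg] by (cases "(\<integral>x. fs' (g x) \<partial>\<pi>) = 0") auto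
  show "\<exists>t. fconj f (ereal t) \<noteq> \<infinity> \<and> fs' t = 0" if "(\<integral>x. fs' (g x) \<partial>\<pi>) = 0"
    using eventually_happens'[OF prob_space.ae_filter_bot[OF \<pi>] eventually_conj[OF fin zero]] that
    by blast
qed

lemma eexp_le_Dtil_finite:
  assumes \<pi>: "prob_space \<pi>" and \<nu>: "prob_space \<nu>"
    and sets: "sets \<nu> = sets \<pi>" and ac: "absolutely_continuous \<pi> \<nu>"
    and f: "fdivFc f" and sg: "conj_subgrad f fs'" and lam: "lam > 0" and h: "h \<in> borel_measurable \<pi>"
    and conj_int: "eintegrable \<pi> (\<lambda>x. fconj f (ereal (lam * (h x - c))))"
    and fs'_int: "integrable \<pi> (\<lambda>x. fs' (lam * (h x - c)))" and D: "fdiv f \<nu> \<pi> \<noteq> \<infinity>"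
  shows "eexp \<nu> (\<lambda>x. ereal (h x))
    \<le> ereal (1 / lam) * Dtil f fs' \<pi> (\<lambda>x. lam * (h x - c)) + ereal c + ereal (1 / lam) * fdiv f \<nu> \<pi>"
proof -
  interpret \<pi>: prob_space \<pi> by fact
  define g where "g x = lam * (h x - c)" for x
  define R where "R x = enn2real (RN_deriv \<pi> \<nu> x)" for x
  define m where "m = (\<integral>x. fs' (g x) \<partial>\<pi>)"
  note conj = eintegrable_fconj[OF \<pi> conj_int, folded g_def]
  obtain t where t: "fconj f (ereal t) \<noteq> \<infinity>" using conj(3) by blast
  note D = fdiv_eq_integral[OF \<pi> \<nu> sets ac fdivFcD(1)[OF f] t D, folded R_def]
  note R = RN_deriv_real_integral[OF \<pi> \<nu> sets ac, folded R_def]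
  note m = integral_conj_subgrad[OF \<pi> fdivFcD(1)[OF f] sg conj(1) fs'_int[folded g_def], folded m_def]
  obtain K a b where K: "fder f m - fconj f (fder f m) = ereal K"
    and bound: "\<And>t x. fconj f (ereal t) \<noteq> \<infinity> \<Longrightarrow> x \<ge> 0 \<Longrightarrow> f x \<noteq> \<infinity> \<Longrightarrow> (m = 0 \<Longrightarrow> fs' t = 0) \<Longrightarrow>
      x * t \<le> real_of_ereal (fconj f (ereal t)) + freal f x + K - a * (x - 1) - b * (fs' t - m)"
    using Dtil_pointwise_bound[OF f sg m(1,2)] by metis
  define W where "W x = real_of_ereal (fconj f (ereal (g x))) + freal f (R x) + K
    - a * (R x - 1) - b * (fs' (g x) - m)" for x
  have W: "integrable \<pi> W" unfolding W_def using conj(2) D(2) R(1) fs'_int[folded g_def] by simp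
  have "(\<integral>x. W x \<partial>\<pi>) = (\<integral>x. real_of_ereal (fconj f (ereal (g x))) \<partial>\<pi>)
      + (\<integral>x. freal f (R x) \<partial>\<pi>) + K"
    unfolding W_def m_def using conj(2) D(2) R fs'_int[folded g_def] by (simp add: \<pi>.prob_space)
  moreover have "AE x in \<pi>. R x * (lam * (h x - c)) \<le> W x"
    using conj(1) D(1) m(3) unfolding W_def g_def R_def
    by eventually_elim (rule bound; simp)
  then have "eexp \<nu> (\<lambda>x. ereal (h x)) \<le> ereal (1 / lam) * ereal (\<integral>x. W x \<partial>\<pi>) + ereal c"
    using eexp_le_of_pointwise_bound[OF \<pi> \<nu> sets ac h lam W] unfolding R_def by simp
  moreover have "Dtil f fs' \<pi> (\<lambda>x. lam * (h x - c))
      = ereal (\<integral>x. real_of_ereal (fconj f (ereal (g x))) \<partial>\<pi>) + ereal K"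
    using conj_int fs'_int K unfolding Dtil_def Lfpi_def g_def m_def
    by (simp add: Let_def minus_ereal_def add.assoc)
  ultimately show ?thesis
    unfolding D(3) by (simp add: add_divide_distrib add_ac)
qed

lemma eexp_le_Dtil:
  assumes \<pi>: "prob_space \<pi>" and \<nu>: "prob_space \<nu>"
    and sets: "sets \<nu> = sets \<pi>" and ac: "absolutely_continuous \<pi> \<nu>"
    and f: "fdivFc f" and sg: "conj_subgrad f fs'" and lam: "lam > 0" and h: "h \<in> borel_measurable \<pi>"
  shows "eexp \<nu> (\<lambda>x. ereal (h x))
    \<le> ereal (1 / lam) * Dtil f fs' \<pi> (\<lambda>x. lam * (h x - c)) + ereal c + ereal (1 / lam) * fdiv f \<nu> \<pi>"
proof (cases "eintegrable \<pi> (\<lambda>x. fconj f (ereal (lam * (h x - c)))) \<and> fdiv f \<nu> \<pi> \<noteq> \<infinity>")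
  case False
  then show ?thesis using lam unfolding Dtil_def by auto
next
  case True
  show ?thesis
  proof (cases "integrable \<pi> (\<lambda>x. fs' (lam * (h x - c)))")
    case False
    then show ?thesis
      using True eexp_le_Lfpi[OF \<pi> \<nu> sets ac fdivFcD(1)[OF f] lam h] unfolding Dtil_def by simp
  qed (use True eexp_le_Dtil_finite[OF assms] in blast)
qed

theorem theorem3:
  fixes \<pi> \<nu> :: "'a measure"
  assumes "prob_space \<pi>" and "prob_space \<nu>" and "sets \<nu> = sets \<pi>"
    and "absolutely_continuous \<pi> \<nu>"
  shows "(\<forall>f fs' (lam::real) (c::real) h.
            fdivFc f \<and> conj_subgrad f fs' \<and> lam > 0 \<and> h \<in> borel_measurable \<pi> \<longrightarrow>
            eexp \<nu> (\<lambda>x. ereal (h x))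
              \<le> ereal (1 / lam) * Dtil f fs' \<pi> (\<lambda>x. lam * (h x - c)) + ereal c
                 + ereal (1 / lam) * fdiv f \<nu> \<pi>)
       \<and> (\<forall>f (lam::real) (c::real) h.
            fdivF f \<and> lam > 0 \<and> h \<in> borel_measurable \<pi> \<longrightarrow>
            eexp \<nu> (\<lambda>x. ereal (h x))
              \<le> ereal (1 / lam) * Lfpi f \<pi> (\<lambda>x. lam * (h x - c)) + ereal c
                 + ereal (1 / lam) * fdiv f \<nu> \<pi>)"
  using eexp_le_Dtil[OF assms] eexp_le_Lfpi[OF assms] by blast

end
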